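(* Let $\phi:\mathbb{R}^2\rightarrow\mathbb{R}^2$ be an invertible affine transformation and let $\sigma:\mathbb R^2\to\mathbb R^2$ be the coordinatewise $\textsc{ReLU}$, $\sigma(x_1,x_2)=(\max\{x_1,0\},\max\{x_2,0\})$. Then there exist $a_1,a_2\in\mathbb{R}^2$ and $b_1,b_2\in\mathbb{R}$ such that, with $\mathcal S:=\{x\in\mathbb R^2:\langle a_1,x\rangle+b_1\ge0,\ \langle a_2,x\rangle+b_2\ge0\}$ and $x^\prime:=\phi^{-1}\circ\sigma\circ\phi(x)$, the following hold: if $x\in\mathcal S$, then $x^\prime=x$; if $x\in\mathbb R^2\setminus\mathcal S$, then $x^\prime\ne x$ and $x^\prime\in\partial\mathcal S$.
   Context: $\partial\mathcal S$ denotes the boundary of $\mathcal S$. *)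

theory Defs
  imports "HOL-Analysis.Analysis"
begin

definition relu2 :: "real^2 \<Rightarrow> real^2" where
  "relu2 x = (\<chi> i. max (x $ i) 0)"

end

theory Submission
  imports Defs
begin

text \<open>ReLU fixes the closed nonnegative quadrant \<open>Q\<close> and sends every point outside \<open>Q\<close> to a
point of \<open>Q\<close> with a vanishing coordinate, hence into \<open>\<partial>Q\<close>. This behaviour is invariant under
conjugation by a homeomorphism of the plane, which carries \<open>Q\<close> and \<open>\<partial>Q\<close> to
\<open>S = \<phi>\<^sup>-\<^sup>1(Q)\<close> and \<open>\<partial>S\<close>; for the affine \<open>\<phi>\<close> the two half-planes cutting out \<open>S\<close> are
read off the rows of its matrix.\<close>

definition nonneg_orthant :: "(real^'n) set" where
  "nonneg_orthant = {y. \<forall>i. 0 \<le> y $ i}"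

definition boundary_projection :: "('a::topological_space \<Rightarrow> 'a) \<Rightarrow> 'a set \<Rightarrow> bool" where
  "boundary_projection r S \<longleftrightarrow>
     (\<forall>x\<in>S. r x = x) \<and> (\<forall>x. x \<notin> S \<longrightarrow> r x \<noteq> x \<and> r x \<in> frontier S)"

lemma zero_component_in_frontier_nonneg_orthant:
  assumes "y \<in> nonneg_orthant" and "y $ i = 0"
  shows "y \<in> frontier nonneg_orthant"
  unfolding frontier_closures
proof
  show "y \<in> closure nonneg_orthant"
    using assms(1) closure_subset by blast
  show "y \<in> closure (- nonneg_orthant)"
    unfolding closure_approachable
  proof (intro allI impI)
    fix e :: real assume "0 < e"
    let ?z = "y - (e / 2) *\<^sub>R axis i 1"
    have "?z $ i < 0" using \<open>0 < e\<close> assms(2) by simp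
    then have "?z \<in> - nonneg_orthant" unfolding nonneg_orthant_def using not_le by blast
    moreover have "dist ?z y < e" using \<open>0 < e\<close> by (simp add: dist_norm)
    ultimately show "\<exists>z\<in>- nonneg_orthant. dist z y < e" by blast
  qed
qed

lemma relu2_eq_self_iff: "relu2 y = y \<longleftrightarrow> y \<in> nonneg_orthant"
proof -
  have "max a 0 = a \<longleftrightarrow> 0 \<le> a" for a :: real
    by (simp add: max_def)
  then show ?thesis
    unfolding relu2_def nonneg_orthant_def vec_eq_iff by simp
qed

lemma relu2_in_nonneg_orthant: "relu2 y \<in> nonneg_orthant"
  unfolding relu2_def nonneg_orthant_def by simp

lemma relu2_zero_component:
  assumes "y \<notin> nonneg_orthant"
  obtains i where "relu2 y $ i = 0"
proof -
  from assms obtain i where "y $ i < 0"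
    by (auto simp: nonneg_orthant_def not_le)
  then have "relu2 y $ i = 0"
    by (simp add: relu2_def)
  then show thesis by (rule that)
qed

lemma boundary_projection_relu2: "boundary_projection relu2 nonneg_orthant"
  unfolding boundary_projection_def
  by (metis relu2_eq_self_iff relu2_in_nonneg_orthant relu2_zero_component
      zero_component_in_frontier_nonneg_orthant)

lemma frontier_vimage_homeomorphism:
  assumes "homeomorphism UNIV UNIV f g"
  shows "frontier (f -` T) = f -` frontier T"
proof -
  have "homeomorphic_map euclidean euclidean f"
    using assms unfolding homeomorphic_map_maps homeomorphic_maps_def homeomorphism_def
    by auto
  then have "frontier (f ` (f -` T)) = f ` frontier (f -` T)"
    using homeomorphic_map_frontier_of[of euclidean euclidean f "f -` T"] by simp
  moreover have "f ` (f -` T) = T" "bij f"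
    using assms unfolding homeomorphism_def by (auto intro: bij_betw_byWitness[of _ g])
  ultimately show ?thesis
    by (metis bij_is_inj inj_vimage_image_eq)
qed

lemma boundary_projection_conjugate:
  assumes hom: "homeomorphism UNIV UNIV f g" and r: "boundary_projection r T"
  shows "boundary_projection (\<lambda>x. g (r (f x))) (f -` T)"
proof -
  have gf: "g (f x) = x" and fg: "f (g y) = y" for x y
    using hom by (simp_all add: homeomorphism_apply1 homeomorphism_apply2)
  show ?thesis
    using r unfolding boundary_projection_def frontier_vimage_homeomorphism[OF hom]
    by (metis gf fg vimage_eq)
qed

lemma homeomorphism_affine:
  fixes A :: "real^'n^'m"
  assumes "invertible A"
  obtains g where "homeomorphism UNIV UNIV (\<lambda>x. A *v x + c) g"
proof -
  obtain B where AB: "A ** B = mat 1" and BA: "B ** A = mat 1"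
    using assms unfolding invertible_def by blast
  have "homeomorphism UNIV UNIV (\<lambda>x. A *v x + c) (\<lambda>y. B *v (y - c))"
    by (rule homeomorphismI)
      (auto intro!: continuous_intros
        simp: matrix_vector_mult_diff_distrib matrix_vector_mul_assoc AB BA)
  then show thesis by (rule that)
qed

lemma vimage_affine_nonneg_orthant:
  fixes A :: "real^2^2"
  shows "(\<lambda>x. A *v x + c) -` nonneg_orthant = {x. A$1 \<bullet> x + c$1 \<ge> 0 \<and> A$2 \<bullet> x + c$2 \<ge> 0}"
  by (auto simp: nonneg_orthant_def forall_2 matrix_mult_dot add.commute)

theorem lemma1:
  fixes \<phi> :: "real^2 \<Rightarrow> real^2" and A :: "real^2^2" and c :: "real^2"
  assumes "invertible A"
    and "\<phi> = (\<lambda>x. A *v x + c)"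
  shows "\<exists>(a1::real^2) (a2::real^2) (b1::real) (b2::real).
           (let S = {x. a1 \<bullet> x + b1 \<ge> 0 \<and> a2 \<bullet> x + b2 \<ge> 0};
                f = (\<lambda>x. inv \<phi> (relu2 (\<phi> x)))
            in (\<forall>x\<in>S. f x = x) \<and>
               (\<forall>x. x \<notin> S \<longrightarrow> f x \<noteq> x \<and> f x \<in> frontier S))"
proof -
  obtain \<psi> where hom: "homeomorphism UNIV UNIV \<phi> \<psi>"
    using homeomorphism_affine[OF assms(1)] assms(2) by blast
  have "inv \<phi> = \<psi>"
    using hom by (intro inv_equality) (simp_all add: homeomorphism_apply1 homeomorphism_apply2)
  then have "boundary_projection (\<lambda>x. inv \<phi> (relu2 (\<phi> x))) (\<phi> -` nonneg_orthant)"
    using boundary_projection_conjugate[OF hom boundary_projection_relu2] by simp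
  then show ?thesis
    unfolding assms(2) vimage_affine_nonneg_orthant boundary_projection_def Let_def by blast
qed

end
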